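(* Let $\Omega$ be a nonempty set, let $\mathcal A$ be an algebra of subsets of $\Omega$, and let $\mathcal X_{\mathcal A}$ denote the set of bounded functions $X:\Omega\to\mathbb R$ that are measurable with respect to $\mathcal A$ (i.e. $\{X>x\}\in\mathcal A$ and $\{X\ge x\}\in\mathcal A$ for all $x\in\mathbb R$). For a mapping $\mathcal R:\mathcal X_{\mathcal A}\to\mathbb R$ the following are equivalent: (i) $\mathcal R$ satisfies ordinality, i.e. $\mathcal R(\phi\circ X)=\phi(\mathcal R(X))$ for all $X\in\mathcal X_{\mathcal A}$ and all increasing (non-strictly) continuous functions $\phi:\mathbb R\to\mathbb R$; (ii) $\mathcal R$ is a Choquet quantile, i.e. there exists a binary capacity $v$ on $\mathcal A$ such that $\mathcal R(X)=\int X\,\mathrm d v$ for all $X\in\mathcal X_{\mathcal A}$.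
   Context: A capacity on $\mathcal A$ is a function $w:\mathcal A\to\mathbb R$ that is increasing ($w(A)\le w(B)$ whenever $A\subseteq B$) with $w(\varnothing)=0$ and $w(\Omega)=1$; it is binary if it takes values only in $\{0,1\}$. For a capacity $w$ and bounded measurable $X$, the Choquet integral is $\int X\,\mathrm dw=\int_{-\infty}^0 (w(X\ge x)-1)\,\mathrm dx+\int_0^\infty w(X\ge x)\,\mathrm dx$. *)

theory Defs
  imports "HOL-Analysis.Analysis"
begin

text \<open>The ground set Omega is the universe of the (arbitrary, hence nonempty) type 'a;
  the algebra of subsets is given by the library predicate algebra UNIV A.\<close>

definition meas_bdd :: "'a set set \<Rightarrow> ('a \<Rightarrow> real) set" where
  "meas_bdd A = {X. (\<exists>M. \<forall>\<omega>. \<bar>X \<omega>\<bar> \<le> M) \<and>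
      (\<forall>x. {\<omega>. X \<omega> > x} \<in> A \<and> {\<omega>. X \<omega> \<ge> x} \<in> A)}"

definition capacity :: "'a set set \<Rightarrow> ('a set \<Rightarrow> real) \<Rightarrow> bool" where
  "capacity A w \<longleftrightarrow> (\<forall>B C. B \<in> A \<longrightarrow> C \<in> A \<longrightarrow> B \<subseteq> C \<longrightarrow> w B \<le> w C)
      \<and> w {} = 0 \<and> w UNIV = 1"

definition binary_capacity :: "'a set set \<Rightarrow> ('a set \<Rightarrow> real) \<Rightarrow> bool" where
  "binary_capacity A w \<longleftrightarrow> capacity A w \<and> (\<forall>B\<in>A. w B \<in> {0, 1})"

definition choquet :: "('a set \<Rightarrow> real) \<Rightarrow> ('a \<Rightarrow> real) \<Rightarrow> real" where
  "choquet w X = integral {..0} (\<lambda>x. w {\<omega>. X \<omega> \<ge> x} - 1)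
                + integral {0..} (\<lambda>x. w {\<omega>. X \<omega> \<ge> x})"

definition ordinal :: "'a set set \<Rightarrow> (('a \<Rightarrow> real) \<Rightarrow> real) \<Rightarrow> bool" where
  "ordinal A R \<longleftrightarrow> (\<forall>X \<in> meas_bdd A. \<forall>\<phi> :: real \<Rightarrow> real.
      mono \<phi> \<longrightarrow> continuous_on UNIV \<phi> \<longrightarrow> R (\<phi> \<circ> X) = \<phi> (R X))"

end

theory Submission
  imports Defs
begin

text \<open>For a binary capacity v the profile x \<mapsto> v {X \<ge> x} is a 0-1 step function, and the
  Choquet integral of X is its jump point t.  For \<phi> increasing and continuous the jump point of
  \<phi> \<circ> X is \<phi> t, so Choquet quantiles are ordinal.  Conversely, for ordinal R put
  v B = R (indicator B).  Ordinality makes v a binary capacity, and comparing X with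
  W = X + indicator {X \<ge> x} through two increasing continuous maps shows that v {X \<ge> x} is 1
  for x < R X and 0 for x > R X, i.e. R X is the jump point.\<close>

definition threshold :: "('a set \<Rightarrow> real) \<Rightarrow> ('a \<Rightarrow> real) \<Rightarrow> real \<Rightarrow> bool" where
  "threshold w X t \<longleftrightarrow>
    (\<forall>x<t. w {\<omega>. X \<omega> \<ge> x} = 1) \<and> (\<forall>x>t. w {\<omega>. X \<omega> \<ge> x} = 0)"

lemma has_integral_interval_step:
  fixes f :: "real \<Rightarrow> real"
  assumes "a \<le> b" and "{a..b} \<subseteq> T"
    and "\<And>x. x \<in> T \<Longrightarrow> x \<noteq> a \<Longrightarrow> x \<noteq> b \<Longrightarrow> f x = (if x \<in> {a..b} then c else 0)"
  shows "(f has_integral (c * (b - a))) T"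
proof -
  let ?g = "\<lambda>x::real. if x \<in> {a..b} then c else 0"
  have "((\<lambda>x. c) has_integral (c * (b - a))) {a..b}"
    using has_integral_const_real[of c a b] \<open>a \<le> b\<close> by (simp add: mult.commute)
  then have "(?g has_integral (c * (b - a))) {a..b}"
    by (rule iffD1[OF has_integral_cong, rotated]) auto
  then have "(?g has_integral (c * (b - a))) T"
    by (rule has_integral_on_superset) (use assms(2) in auto)
  then show ?thesis
    by (rule has_integral_spike[where S="{a,b}", rotated 2]) (auto simp: assms(3))
qed

lemma choquet_threshold:
  assumes "threshold w X t"
  shows "choquet w X = t"
proof -
  have lo: "\<And>x. x < t \<Longrightarrow> w {\<omega>. X \<omega> \<ge> x} = 1" and hi: "\<And>x. x > t \<Longrightarrow> w {\<omega>. X \<omega> \<ge> x} = 0"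
    using assms unfolding threshold_def by auto
  show ?thesis
  proof (cases "t \<ge> 0")
    case True
    have "((\<lambda>x. w {\<omega>. X \<omega> \<ge> x} - 1) has_integral (0 * (0 - 0))) {..0}"
      by (rule has_integral_interval_step) (use True lo in auto)
    moreover have "((\<lambda>x. w {\<omega>. X \<omega> \<ge> x}) has_integral (1 * (t - 0))) {0..}"
      by (rule has_integral_interval_step) (use True lo hi in auto)
    ultimately show ?thesis unfolding choquet_def by (simp add: integral_unique)
  next
    case False
    have "((\<lambda>x. w {\<omega>. X \<omega> \<ge> x} - 1) has_integral ((-1) * (0 - t))) {..0}"
      by (rule has_integral_interval_step) (use False lo hi in auto)
    moreover have "((\<lambda>x. w {\<omega>. X \<omega> \<ge> x}) has_integral (0 * (0 - 0))) {0..}"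
      by (rule has_integral_interval_step) (use False hi in auto)
    ultimately show ?thesis unfolding choquet_def by (simp add: integral_unique)
  qed
qed

lemma meas_bddI:
  assumes "\<And>\<omega>. \<bar>X \<omega>\<bar> \<le> M"
    and "\<And>x. {\<omega>. X \<omega> > x} \<in> A" and "\<And>x. {\<omega>. X \<omega> \<ge> x} \<in> A"
  shows "X \<in> meas_bdd A"
  using assms unfolding meas_bdd_def by blast

lemma meas_bddD:
  assumes "X \<in> meas_bdd A"
  shows "\<exists>M. \<forall>\<omega>. \<bar>X \<omega>\<bar> \<le> M" and "{\<omega>. X \<omega> > x} \<in> A" and "{\<omega>. X \<omega> \<ge> x} \<in> A"
  using assms unfolding meas_bdd_def by blast+

lemma meas_bdd_const:
  assumes "algebra UNIV A"
  shows "(\<lambda>\<omega>. c) \<in> meas_bdd A"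
proof -
  interpret algebra UNIV A by fact
  show ?thesis
    by (rule meas_bddI[of _ "\<bar>c\<bar>"]) (simp_all add: Collect_const)
qed

lemma meas_bdd_add_indicator:
  assumes "algebra UNIV A" and X: "X \<in> meas_bdd A" and "B \<in> A"
  shows "(\<lambda>\<omega>. X \<omega> + indicator B \<omega>) \<in> meas_bdd A"
proof -
  interpret algebra UNIV A by fact
  obtain M where "\<And>\<omega>. \<bar>X \<omega>\<bar> \<le> M" using meas_bddD(1)[OF X] by blast
  then have "\<bar>X \<omega> + indicator B \<omega>\<bar> \<le> M + 1" for \<omega>
    by (smt (verit) indicator_eq_0_iff indicator_eq_1_iff)
  moreover have "{\<omega>. X \<omega> + indicator B \<omega> > y} =
      ({\<omega>. X \<omega> > y} - B) \<union> ({\<omega>. X \<omega> > y - 1} \<inter> B)" for y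
    by (auto simp: indicator_def)
  moreover have "{\<omega>. X \<omega> + indicator B \<omega> \<ge> y} =
      ({\<omega>. X \<omega> \<ge> y} - B) \<union> ({\<omega>. X \<omega> \<ge> y - 1} \<inter> B)" for y
    by (auto simp: indicator_def)
  ultimately show ?thesis
    by (intro meas_bddI) (auto intro!: Un Int Diff meas_bddD[OF X] \<open>B \<in> A\<close>)
qed

lemma meas_bdd_indicator:
  assumes "algebra UNIV A" and "B \<in> A"
  shows "indicator B \<in> meas_bdd A"
  using meas_bdd_add_indicator[OF assms(1) meas_bdd_const[OF assms(1)] assms(2), of 0]
  by simp

lemma upclosed_cases:
  fixes U :: "'a::conditionally_complete_linorder set"
  assumes up: "\<And>x z. x \<in> U \<Longrightarrow> x \<le> z \<Longrightarrow> z \<in> U"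
  obtains "U = {}" | "U = UNIV" | s where "U = {s<..}" | s where "U = {s..}"
proof -
  consider "U = {}" | "\<not> bdd_below U" | "U \<noteq> {}" "bdd_below U" by blast
  then show ?thesis
  proof cases
    case 2
    have "z \<in> U" for z
    proof -
      obtain x where "x \<in> U" "x \<le> z"
        using 2 unfolding bdd_below_def by (meson linorder_le_cases)
      then show ?thesis by (rule up)
    qed
    then show ?thesis using that(2) by blast
  next
    case 3
    define s where "s = Inf U"
    have "x \<in> U" if "s < x" for x
    proof -
      obtain u where "u \<in> U" "u < x"
        using \<open>s < x\<close> cInf_less_iff[OF 3] unfolding s_def by blast
      then show ?thesis by (auto intro: up)
    qed
    moreover have "s \<le> x" if "x \<in> U" for x
      unfolding s_def using that \<open>bdd_below U\<close> by (rule cInf_lower)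
    ultimately have "U = {s<..} \<or> U = {s..}"
      by (cases "s \<in> U") (auto simp: less_le)
    then show ?thesis using that(3,4) by blast
  qed (use that(1) in blast)
qed

lemma meas_bdd_preimage_upclosed:
  assumes "algebra UNIV A" and X: "X \<in> meas_bdd A"
    and "\<And>x z. x \<in> U \<Longrightarrow> x \<le> z \<Longrightarrow> z \<in> U"
  shows "X -` U \<in> A"
proof -
  interpret algebra UNIV A by fact
  show ?thesis
  proof (rule upclosed_cases[OF assms(3)])
    fix s assume "U = {s<..}"
    then show ?thesis using meas_bddD(2)[OF X, of s] by (simp add: vimage_def)
  next
    fix s assume "U = {s..}"
    then show ?thesis using meas_bddD(3)[OF X, of s] by (simp add: vimage_def)
  qed simp_all
qed

lemma meas_bdd_mono_comp:
  fixes \<phi> :: "real \<Rightarrow> real"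
  assumes "algebra UNIV A" and X: "X \<in> meas_bdd A" and "mono \<phi>"
  shows "\<phi> \<circ> X \<in> meas_bdd A"
proof -
  obtain M where M: "\<And>\<omega>. \<bar>X \<omega>\<bar> \<le> M" using meas_bddD(1)[OF X] by blast
  have "\<bar>\<phi> (X \<omega>)\<bar> \<le> \<bar>\<phi> (-M)\<bar> + \<bar>\<phi> M\<bar>" for \<omega>
  proof -
    have "\<phi> (-M) \<le> \<phi> (X \<omega>)" "\<phi> (X \<omega>) \<le> \<phi> M"
      using M[of \<omega>] by (auto intro!: monoD[OF \<open>mono \<phi>\<close>])
    then show ?thesis by simp
  qed
  moreover have "X -` {x. y < \<phi> x} \<in> A" "X -` {x. y \<le> \<phi> x} \<in> A" for y
    using monoD[OF \<open>mono \<phi>\<close>]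
    by (intro meas_bdd_preimage_upclosed[OF assms(1,2)]; force)+
  ultimately show ?thesis
    by (intro meas_bddI) (auto simp: vimage_def)
qed

lemma binary_capacity_threshold_exists:
  assumes v: "binary_capacity A v" and X: "X \<in> meas_bdd A"
  obtains t where "threshold v X t"
proof -
  have v_mono: "\<And>B C. B \<in> A \<Longrightarrow> C \<in> A \<Longrightarrow> B \<subseteq> C \<Longrightarrow> v B \<le> v C"
    and "v {} = 0" "v UNIV = 1" and v_01: "\<And>B. B \<in> A \<Longrightarrow> v B \<in> {0, 1}"
    using v unfolding binary_capacity_def capacity_def by auto
  obtain M where M: "\<And>\<omega>. \<bar>X \<omega>\<bar> \<le> M" using meas_bddD(1)[OF X] by blast
  define S where "S = {x. v {\<omega>. X \<omega> \<ge> x} = 1}"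
  have X_bounds: "-M \<le> X \<omega>" "X \<omega> \<le> M" for \<omega>
    using M[of \<omega>] by linarith+
  then have "{\<omega>. X \<omega> \<ge> -M} = UNIV" by auto
  then have "-M \<in> S"
    using \<open>v UNIV = 1\<close> by (simp add: S_def)
  then have "S \<noteq> {}" by blast
  have "x \<le> M" if "x \<in> S" for x
  proof (rule ccontr)
    assume "\<not> x \<le> M"
    then have "X \<omega> < x" for \<omega>
      using X_bounds(2)[of \<omega>] by linarith
    then have "{\<omega>. X \<omega> \<ge> x} = {}"
      by (simp add: not_le)
    with that \<open>v {} = 0\<close> show False by (simp add: S_def)
  qed
  then have "bdd_above S" by (rule bdd_aboveI)
  have "v {\<omega>. X \<omega> \<ge> x} = 1" if "x < Sup S" for x
  proof -
    obtain x' where "x' \<in> S" "x < x'"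
      using \<open>x < Sup S\<close> less_cSup_iff[OF \<open>S \<noteq> {}\<close> \<open>bdd_above S\<close>] by blast
    have "v {\<omega>. X \<omega> \<ge> x'} \<le> v {\<omega>. X \<omega> \<ge> x}"
      using \<open>x < x'\<close> by (intro v_mono[OF meas_bddD(3)[OF X] meas_bddD(3)[OF X]]) auto
    with \<open>x' \<in> S\<close> have "1 \<le> v {\<omega>. X \<omega> \<ge> x}"
      by (simp add: S_def)
    then show ?thesis using v_01[OF meas_bddD(3)[OF X], of x] by auto
  qed
  moreover have "v {\<omega>. X \<omega> \<ge> x} = 0" if "x > Sup S" for x
  proof -
    have "x \<notin> S" using that cSup_upper[OF _ \<open>bdd_above S\<close>, of x] by force
    then show ?thesis using v_01[OF meas_bddD(3)[OF X], of x] by (auto simp: S_def)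
  qed
  ultimately show ?thesis using that by (auto simp: threshold_def)
qed

lemma continuous_exists_less_left:
  fixes \<phi> :: "real \<Rightarrow> real"
  assumes "continuous_on UNIV \<phi>" and "y < \<phi> t"
  obtains s where "s < t" and "y < \<phi> s"
proof -
  have "isCont \<phi> t"
    using assms(1) by (simp add: continuous_on_eq_continuous_at)
  then have "(\<phi> \<longlongrightarrow> \<phi> t) (at_left t)"
    by (simp add: isCont_def filterlim_at_split)
  then have "\<forall>\<^sub>F s in at_left t. y < \<phi> s"
    using assms(2) by (rule order_tendstoD(1))
  moreover have "\<forall>\<^sub>F s in at_left t. s \<in> {t - 1<..<t}"
    by (rule eventually_at_left_real) simp
  ultimately obtain s where "y < \<phi> s" "s \<in> {t - 1<..<t}"
    using eventually_happens'[OF trivial_limit_at_left_real eventually_conj] by blast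
  then show ?thesis
    by (intro that) auto
qed

lemma continuous_exists_greater_right:
  fixes \<phi> :: "real \<Rightarrow> real"
  assumes "continuous_on UNIV \<phi>" and "\<phi> t < y"
  obtains s where "t < s" and "\<phi> s < y"
proof -
  have "isCont \<phi> t"
    using assms(1) by (simp add: continuous_on_eq_continuous_at)
  then have "(\<phi> \<longlongrightarrow> \<phi> t) (at_right t)"
    by (simp add: isCont_def filterlim_at_split)
  then have "\<forall>\<^sub>F s in at_right t. \<phi> s < y"
    using assms(2) by (rule order_tendstoD(2))
  moreover have "\<forall>\<^sub>F s in at_right t. s \<in> {t<..<t + 1}"
    by (rule eventually_at_right_real) simp
  ultimately obtain s where "\<phi> s < y" "s \<in> {t<..<t + 1}"
    using eventually_happens'[OF trivial_limit_at_right_real eventually_conj] by blast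
  then show ?thesis
    by (intro that) auto
qed

lemma threshold_mono_comp:
  fixes \<phi> :: "real \<Rightarrow> real"
  assumes "algebra UNIV A" and w: "capacity A w" and X: "X \<in> meas_bdd A"
    and "mono \<phi>" and "continuous_on UNIV \<phi>" and "threshold w X t"
  shows "threshold w (\<phi> \<circ> X) (\<phi> t)"
proof -
  interpret algebra UNIV A by fact
  have w_mono: "\<And>B C. B \<in> A \<Longrightarrow> C \<in> A \<Longrightarrow> B \<subseteq> C \<Longrightarrow> w B \<le> w C"
    and "w {} = 0" "w UNIV = 1"
    using w unfolding capacity_def by auto
  have XA: "{\<omega>. X \<omega> \<ge> x} \<in> A" and \<phi>XA: "{\<omega>. \<phi> (X \<omega>) \<ge> x} \<in> A" for x
    using meas_bddD(3)[OF X] meas_bddD(3)[OF meas_bdd_mono_comp[OF assms(1,3,4)]] by auto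
  have "w {\<omega>. \<phi> (X \<omega>) \<ge> y} = 1" if "y < \<phi> t" for y
  proof -
    obtain s where "s < t" "y < \<phi> s"
      using continuous_exists_less_left[OF \<open>continuous_on UNIV \<phi>\<close> \<open>y < \<phi> t\<close>] .
    then have "{\<omega>. X \<omega> \<ge> s} \<subseteq> {\<omega>. \<phi> (X \<omega>) \<ge> y}"
      using order.strict_trans2[OF \<open>y < \<phi> s\<close> monoD[OF \<open>mono \<phi>\<close>]] by fastforce
    then have "w {\<omega>. X \<omega> \<ge> s} \<le> w {\<omega>. \<phi> (X \<omega>) \<ge> y}"
      by (rule w_mono[OF XA \<phi>XA])
    moreover have "w {\<omega>. \<phi> (X \<omega>) \<ge> y} \<le> w UNIV"
      by (rule w_mono[OF \<phi>XA]) auto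
    ultimately show ?thesis
      using \<open>s < t\<close> \<open>threshold w X t\<close> \<open>w UNIV = 1\<close> by (auto simp: threshold_def)
  qed
  moreover have "w {\<omega>. \<phi> (X \<omega>) \<ge> y} = 0" if "y > \<phi> t" for y
  proof -
    obtain s where "t < s" "\<phi> s < y"
      using continuous_exists_greater_right[OF \<open>continuous_on UNIV \<phi>\<close> \<open>\<phi> t < y\<close>] .
    then have "{\<omega>. \<phi> (X \<omega>) \<ge> y} \<subseteq> {\<omega>. X \<omega> \<ge> s}"
    proof (intro subsetI CollectI)
      fix \<omega> assume "\<omega> \<in> {\<omega>. \<phi> (X \<omega>) \<ge> y}"
      then have "\<phi> s < \<phi> (X \<omega>)" using \<open>\<phi> s < y\<close> by simp
      then show "s \<le> X \<omega>" by (rule mono_strict_invE[OF \<open>mono \<phi>\<close>]) simp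
    qed
    then have "w {\<omega>. \<phi> (X \<omega>) \<ge> y} \<le> w {\<omega>. X \<omega> \<ge> s}"
      by (rule w_mono[OF \<phi>XA XA])
    moreover have "w {} \<le> w {\<omega>. \<phi> (X \<omega>) \<ge> y}"
      by (rule w_mono[OF _ \<phi>XA]) auto
    ultimately show ?thesis
      using \<open>t < s\<close> \<open>threshold w X t\<close> \<open>w {} = 0\<close> by (auto simp: threshold_def)
  qed
  ultimately show ?thesis by (simp add: threshold_def)
qed

lemma ordinal_choquet:
  assumes "algebra UNIV A" and "binary_capacity A v"
  shows "ordinal A (choquet v)"
  unfolding ordinal_def
proof (intro ballI allI impI)
  fix X and \<phi> :: "real \<Rightarrow> real"
  assume X: "X \<in> meas_bdd A" and "mono \<phi>" "continuous_on UNIV \<phi>"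
  obtain t where t: "threshold v X t"
    using binary_capacity_threshold_exists[OF assms(2) X] .
  then have "threshold v (\<phi> \<circ> X) (\<phi> t)"
    using assms unfolding binary_capacity_def
    by (intro threshold_mono_comp[OF assms(1) _ X \<open>mono \<phi>\<close> \<open>continuous_on UNIV \<phi>\<close>]) auto
  with t show "choquet v (\<phi> \<circ> X) = \<phi> (choquet v X)"
    by (simp add: choquet_threshold)
qed

lemma ordinal_cong:
  assumes "algebra UNIV A" and "\<And>X. X \<in> meas_bdd A \<Longrightarrow> R X = R' X"
  shows "ordinal A R \<longleftrightarrow> ordinal A R'"
  using assms meas_bdd_mono_comp[OF assms(1)] unfolding ordinal_def by metis

definition clamp01 :: "real \<Rightarrow> real" where
  "clamp01 x = max 0 (min 1 x)"

lemma mono_clamp01: "mono clamp01"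
  unfolding clamp01_def by (rule monoI) auto

lemma continuous_on_clamp01: "continuous_on UNIV clamp01"
  unfolding clamp01_def by (intro continuous_intros)

lemma ordinalD:
  assumes "ordinal A R" and "X \<in> meas_bdd A" and "mono \<phi>" and "continuous_on UNIV \<phi>"
  shows "R (\<phi> \<circ> X) = \<phi> (R X)"
  using assms unfolding ordinal_def by blast

lemma ordinal_const:
  assumes "algebra UNIV A" and "ordinal A R"
  shows "R (\<lambda>\<omega>. c) = c"
  using ordinalD[OF assms(2) meas_bdd_const[OF assms(1)], of "\<lambda>_. c" 0]
  by (simp add: o_def mono_def)

lemma ordinal_indicator_01:
  assumes "algebra UNIV A" and "ordinal A R" and "B \<in> A"
  shows "R (indicator B) \<in> {0, 1}"
proof -
  let ?r = "R (indicator B)" and ?\<phi> = "\<lambda>x. (clamp01 x)\<^sup>2"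
  have "mono ?\<phi>"
    by (rule monoI) (simp add: clamp01_def power_mono monoD[OF mono_clamp01])
  moreover have "continuous_on UNIV ?\<phi>"
    by (intro continuous_intros continuous_on_clamp01)
  ultimately have "R (?\<phi> \<circ> indicator B) = ?\<phi> ?r"
    by (rule ordinalD[OF assms(2) meas_bdd_indicator[OF assms(1,3)]])
  moreover have "?\<phi> \<circ> indicator B = indicator B"
    by (auto simp: fun_eq_iff clamp01_def indicator_def)
  ultimately have "?r = (clamp01 ?r)\<^sup>2"
    by simp
  then show ?thesis
    \<comment> \<open>0 and 1 are the only fixed points of x \<mapsto> (clamp01 x)^2\<close>
    by (auto simp: clamp01_def power2_eq_square max_def min_def split: if_splits)
qed

lemma ordinal_indicator_mono:
  assumes "algebra UNIV A" and "ordinal A R" and "B \<in> A" "C \<in> A" "B \<subseteq> C"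
  shows "R (indicator B) \<le> R (indicator C)"
proof -
  let ?Y = "\<lambda>\<omega>. indicator B \<omega> + indicator C \<omega>" and ?\<phi> = "\<lambda>x. clamp01 (x - 1)"
  have Y: "?Y \<in> meas_bdd A"
    by (intro meas_bdd_add_indicator meas_bdd_indicator assms)
  have "mono ?\<phi>" "continuous_on UNIV ?\<phi>"
    unfolding clamp01_def by (auto intro!: monoI continuous_intros)
  then have "R (?\<phi> \<circ> ?Y) = clamp01 (R ?Y - 1)"
    by (rule ordinalD[OF assms(2) Y])
  moreover have "R (clamp01 \<circ> ?Y) = clamp01 (R ?Y)"
    by (rule ordinalD[OF assms(2) Y mono_clamp01 continuous_on_clamp01])
  moreover have "?\<phi> \<circ> ?Y = indicator B" "clamp01 \<circ> ?Y = indicator C"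
    using \<open>B \<subseteq> C\<close> by (auto simp: fun_eq_iff clamp01_def indicator_def)
  ultimately show ?thesis
    using monoD[OF mono_clamp01, of "R ?Y - 1" "R ?Y"] by simp
qed

lemma ordinal_binary_capacity:
  assumes "algebra UNIV A" and "ordinal A R"
  shows "binary_capacity A (\<lambda>B. R (indicator B))"
proof -
  have "indicator {} = (\<lambda>\<omega>::'a. 0::real)" "indicator UNIV = (\<lambda>\<omega>::'a. 1::real)"
    by (simp_all add: fun_eq_iff)
  then show ?thesis
    using ordinal_indicator_01[OF assms] ordinal_indicator_mono[OF assms]
      ordinal_const[OF assms, of 0] ordinal_const[OF assms, of 1]
    unfolding binary_capacity_def capacity_def by auto
qed

lemma ordinal_threshold:
  assumes "algebra UNIV A" and "ordinal A R" and X: "X \<in> meas_bdd A"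
  shows "threshold (\<lambda>B. R (indicator B)) X (R X)"
proof -
  txt \<open>W lifts {X \<ge> x} by one, leaving a gap [x, x + 1) in its range: collapsing the
    gap to x recovers X, and clamping W - x to [0, 1] recovers the indicator.\<close>
  have collapse: "\<exists>r. R X = min r x + max 0 (r - (x + 1)) \<and>
      R (indicator {\<omega>. X \<omega> \<ge> x}) = clamp01 (r - x)" for x
  proof -
    let ?W = "\<lambda>\<omega>. X \<omega> + indicator {\<omega>. X \<omega> \<ge> x} \<omega>"
      and ?\<phi> = "\<lambda>w. min w x + max 0 (w - (x + 1))" and ?\<psi> = "\<lambda>w. clamp01 (w - x)"
    have W: "?W \<in> meas_bdd A"
      by (intro meas_bdd_add_indicator meas_bddD(3) assms)
    have "mono ?\<phi>" "continuous_on UNIV ?\<phi>" "mono ?\<psi>" "continuous_on UNIV ?\<psi>"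
      unfolding clamp01_def by (auto intro!: monoI continuous_intros)
    then have "R (?\<phi> \<circ> ?W) = ?\<phi> (R ?W)" "R (?\<psi> \<circ> ?W) = ?\<psi> (R ?W)"
      by (simp_all add: ordinalD[OF assms(2) W])
    moreover have "?\<phi> \<circ> ?W = X" "?\<psi> \<circ> ?W = indicator {\<omega>. X \<omega> \<ge> x}"
      by (auto simp: fun_eq_iff clamp01_def indicator_def)
    ultimately show ?thesis
      by auto
  qed
  have "R (indicator {\<omega>. X \<omega> \<ge> x}) = 1" if "x < R X" for x
  proof -
    obtain r where r: "R X = min r x + max 0 (r - (x + 1))"
      and "R (indicator {\<omega>. X \<omega> \<ge> x}) = clamp01 (r - x)"
      using collapse by blast
    moreover have "x < r"
      using r \<open>x < R X\<close> by (cases "r \<le> x") auto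
    ultimately have "R (indicator {\<omega>. X \<omega> \<ge> x}) \<noteq> 0"
      by (simp add: clamp01_def)
    then show ?thesis
      using ordinal_indicator_01[OF assms(1,2) meas_bddD(3)[OF X]] by blast
  qed
  moreover have "R (indicator {\<omega>. X \<omega> \<ge> x}) = 0" if "R X < x" for x
  proof -
    obtain r where r: "R X = min r x + max 0 (r - (x + 1))"
      and "R (indicator {\<omega>. X \<omega> \<ge> x}) = clamp01 (r - x)"
      using collapse by blast
    moreover have "r < x"
      using r \<open>R X < x\<close> by (cases "r < x") auto
    ultimately show ?thesis
      by (simp add: clamp01_def)
  qed
  ultimately show ?thesis
    by (simp add: threshold_def)
qed

theorem theorem1:
  fixes A :: "'a set set" and R :: "('a \<Rightarrow> real) \<Rightarrow> real"
  assumes "algebra UNIV A"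
  shows "ordinal A R \<longleftrightarrow>
    (\<exists>v. binary_capacity A v \<and> (\<forall>X \<in> meas_bdd A. R X = choquet v X))"
proof
  assume "ordinal A R"
  then show "\<exists>v. binary_capacity A v \<and> (\<forall>X \<in> meas_bdd A. R X = choquet v X)"
    using ordinal_binary_capacity[OF assms] ordinal_threshold[OF assms] choquet_threshold
    by metis
next
  assume "\<exists>v. binary_capacity A v \<and> (\<forall>X \<in> meas_bdd A. R X = choquet v X)"
  then obtain v where "binary_capacity A v" and "\<And>X. X \<in> meas_bdd A \<Longrightarrow> R X = choquet v X"
    by blast
  then show "ordinal A R"
    using ordinal_cong[OF assms] ordinal_choquet[OF assms] by metis
qed

end
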